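(* Let $d$ be a positive odd integer, $n=\frac{d^2+1}{2}$, and $P_m(x)=1+x+\cdots+x^{m-1}\in\mathbb{F}_2[x]$. Then: (1) $xP_d(x^d)$ is an inverse of $P_d(x)$ both modulo $x^n-1$ and modulo $P_n(x)$, i.e. $P_d(x)\cdot xP_d(x^d)\equiv 1$ modulo each of these; and this inverse $xP_d(x^d)$ has weight $d$. (2) In $\mathbb{F}_2[x]$, $$P_n(x)=P_d(x)\big(1+x^d+x^{2d}+\cdots+x^{d(\frac{d-1}{2}-1)}\big)+\big(x^{d\frac{d-1}{2}}+x^{d\frac{d-1}{2}+1}+\cdots+x^{n-1}\big).$$
   Context: Weight means number of nonzero coefficients. *)

theory Defs
  imports "HOL-Computational_Algebra.Polynomial" "HOL-Library.Z2"
begin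

definition Pm :: "nat \<Rightarrow> bit poly" where
  "Pm m = (\<Sum>i<m. monom 1 i)"

definition weight :: "bit poly \<Rightarrow> nat" where
  "weight p = card {i. coeff p i \<noteq> 0}"

end

theory Submission
  imports Defs
begin

text \<open>Everything follows from two telescoping identities for \<open>P m = 1 + x + \<dots> + x^(m-1)\<close>:
  \<open>P a(x) \<cdot> P b(x^a) = P (a b)(x)\<close> and \<open>P (2n) = (1 + x^n) \<cdot> P n\<close>. Since \<open>d^2 + 1 = 2n\<close>,
  the first gives \<open>P d(x) \<cdot> x P d(x^d) + 1 = x P (d^2) + 1 = P (2n) = (1 + x^n) \<cdot> P n\<close>, and over \<open>\<bbbF>\<^sub>2\<close>
  this is divisible by both \<open>x^n - 1 = x^n + 1\<close> and \<open>P n\<close>. Part (2) splits \<open>P n\<close> after the first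
  \<open>d k\<close> terms, \<open>k = (d - 1)/2\<close>, and applies the first identity to \<open>P (d k)\<close>.\<close>

lemma Pm_split:
  assumes "m \<le> n"
  shows "Pm n = Pm m + (\<Sum>i\<in>{m..<n}. monom 1 i)"
  unfolding Pm_def lessThan_atLeast0 using assms by (simp add: sum.atLeastLessThan_concat)

lemma Pm_add: "Pm (m + l) = Pm m + monom 1 m * Pm l"
proof -
  have "(\<Sum>i\<in>{m..<m+l}. monom (1::bit) i) = (\<Sum>i<l. monom 1 (m + i))"
    by (rule sum.reindex_bij_witness[of _ "\<lambda>i. i + m" "\<lambda>i. i - m"]) auto
  also have "\<dots> = monom 1 m * Pm l"
    unfolding Pm_def sum_distrib_left by (simp add: mult_monom)
  finally show ?thesis using Pm_split[of m "m + l"] by simp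
qed

lemma Pm_Suc: "Pm (Suc m) = 1 + monom 1 1 * Pm m"
  using Pm_add[of 1 m] by (simp add: Pm_def)

lemma Pm_double: "Pm (n + n) = (monom 1 n + 1) * Pm n"
  using Pm_add[of n n] by (simp add: algebra_simps)

lemma pcompose_monom_one: "pcompose (monom (1::'a::comm_semiring_1) j) q = q ^ j"
  by (induction j) (auto simp: monom_Suc pcompose_pCons monom_0 pcompose_const one_pCons)

lemma Pm_pcompose_monom: "pcompose (Pm b) (monom 1 a) = (\<Sum>j<b. monom 1 (a * j))"
  unfolding Pm_def pcompose_sum pcompose_monom_one monom_power by (simp add: mult.commute)

lemma Pm_mult_Pm_pcompose_monom: "Pm a * pcompose (Pm b) (monom 1 a) = Pm (a * b)"
proof (induction b)
  case 0
  then show ?case by (simp add: Pm_def)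
next
  case (Suc b)
  then have "Pm a * pcompose (Pm (Suc b)) (monom 1 a) = Pm (a * b) + monom 1 (a * b) * Pm a"
    by (simp add: Pm_pcompose_monom distrib_left mult.commute)
  also have "\<dots> = Pm (a * Suc b)"
    using Pm_add[of "a * b" a] by (simp add: add.commute)
  finally show ?case .
qed

lemma pCons_0_1_eq_monom: "[:0, 1:] = (monom 1 1 :: 'a::comm_semiring_1 poly)"
  by (simp add: monom_Suc monom_0 one_pCons)

lemma uminus_bit_poly: "- (p :: bit poly) = p"
  by (simp add: poly_eq_iff)

lemma diff_bit_poly: "(p :: bit poly) - q = p + q"
  by (simp add: diff_conv_add_uminus uminus_bit_poly)

lemma bit_poly_mod_eq_one_iff: "(p :: bit poly) mod q = 1 mod q \<longleftrightarrow> q dvd p + 1"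
  by (simp add: mod_eq_dvd_iff diff_bit_poly)

lemma coeff_sum_monom_one: "finite A \<Longrightarrow> coeff (\<Sum>i\<in>A. monom (1::bit) i) k = (if k \<in> A then 1 else 0)"
  by (simp add: coeff_sum coeff_monom)

lemma weight_sum_monom_one: "finite A \<Longrightarrow> weight (\<Sum>i\<in>A. monom 1 i) = card A"
  unfolding weight_def by (simp add: coeff_sum_monom_one)

lemma weight_x_Pm_pcompose_monom:
  assumes "a > 0"
  shows "weight ([:0, 1:] * pcompose (Pm b) (monom 1 a)) = b"
proof -
  have inj: "inj_on (\<lambda>j. a * j + 1) {..<b}"
    using assms by (auto simp: inj_on_def)
  have "[:0, 1:] * pcompose (Pm b) (monom 1 a) = (\<Sum>j<b. monom (1::bit) (a * j + 1))"
    unfolding pCons_0_1_eq_monom Pm_pcompose_monom sum_distrib_left by (simp add: mult_monom)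
  also have "\<dots> = (\<Sum>i\<in>(\<lambda>j. a * j + 1) ` {..<b}. monom 1 i)"
    using sum.reindex[OF inj, of "monom (1::bit)"] by simp
  finally show ?thesis
    using inj by (simp add: weight_sum_monom_one card_image)
qed

theorem lemma2:
  fixes d n :: nat
  assumes "odd d" and "d > 0" and "n = (d^2 + 1) div 2"
  shows "(Pm d * ([:0, 1:] * pcompose (Pm d) (monom 1 d))) mod (monom 1 n - 1)
           = 1 mod (monom 1 n - 1)
       \<and> (Pm d * ([:0, 1:] * pcompose (Pm d) (monom 1 d))) mod (Pm n) = 1 mod (Pm n)
       \<and> weight ([:0, 1:] * pcompose (Pm d) (monom 1 d)) = d
       \<and> Pm n = Pm d * (\<Sum>i < (d - 1) div 2. monom 1 (d * i))
                + (\<Sum>i \<in> {d * ((d - 1) div 2)..<n}. monom 1 i)"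
proof -
  obtain k where k: "d = 2 * k + 1"
    using assms(1) oddE by blast
  then have n: "n = 2 * k * k + 2 * k + 1"
    using assms(3) by (simp add: power2_eq_square algebra_simps)
  have half: "(d - 1) div 2 = k" and dk_le_n: "d * k \<le> n"
    using k n by (simp_all add: algebra_simps)
  let ?inv = "[:0, 1:] * pcompose (Pm d) (monom 1 d)"
  have "Pm d * ?inv + 1 = Pm (Suc (d * d))"
    unfolding pCons_0_1_eq_monom Pm_Suc Pm_mult_Pm_pcompose_monom[symmetric] by (simp add: ac_simps)
  also have "Suc (d * d) = n + n"
    using k n by (simp add: algebra_simps)
  finally have key: "Pm d * ?inv + 1 = (monom 1 n + 1) * Pm n"
    by (simp add: Pm_double)
  have "Pm d * ?inv mod (monom 1 n - 1) = 1 mod (monom 1 n - 1)"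
    unfolding bit_poly_mod_eq_one_iff key diff_bit_poly by simp
  moreover have "Pm d * ?inv mod Pm n = 1 mod Pm n"
    unfolding bit_poly_mod_eq_one_iff key by simp
  moreover have "weight ?inv = d"
    using assms(2) by (rule weight_x_Pm_pcompose_monom)
  moreover have "Pm n = Pm d * (\<Sum>i < (d - 1) div 2. monom 1 (d * i))
                + (\<Sum>i \<in> {d * ((d - 1) div 2)..<n}. monom 1 i)"
    using half Pm_split[OF dk_le_n] by (simp add: Pm_mult_Pm_pcompose_monom flip: Pm_pcompose_monom)
  ultimately show ?thesis
    by blast
qed

end
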